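(* Let $\sigma_1,\sigma_2,\sigma_3>0$ and $\rho_{12},\rho_\varnothing\in[-1,1]$ with $\sigma_1^2+\sigma_2^2+2\rho_{12}\sigma_1\sigma_2>0$. Consider all multivariate normal random vectors $(X_1,X_2,X_3)$ with $X_i\sim\mathcal{N}(0,\sigma_i^2)$, $i=1,2,3$, such that the copula of $(X_1,X_2)$ is the bivariate normal copula with correlation $\rho_{12}$ and the copula of $(X_1+X_2,X_3)$ is the bivariate normal copula with correlation $\rho_\varnothing$ (equivalently $\operatorname{corr}(X_1,X_2)=\rho_{12}$ and $\operatorname{corr}(X_1+X_2,X_3)=\rho_\varnothing$). Then the set of values taken by $\operatorname{corr}(X_1,X_3)$ over all such vectors is exactly the interval $[\rho_{13}^{\min},\rho_{13}^{\max}]$, where \[ \rho_{13}^{\min/\max}=\frac{\rho_\varnothing\rho_{12}\sigma_2+\rho_\varnothing\sigma_1}{\sqrt{\sigma_1^2+\sigma_2^2+2\rho_{12}\sigma_1\sigma_2}}\mp\frac{\sqrt{\sigma_2^2(1-\rho_{12}^2)(1-\rho_\varnothing^2)}}{\sqrt{\sigma_1^2+\sigma_2^2+2\rho_{12}\sigma_1\sigma_2}}. \]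
   Context: This describes the multivariate normal mildly tree dependent distributions of the three-dimensional Gaussian aggregation tree in which $X_1$ and $X_2$ are first aggregated via the normal copula with correlation $\rho_{12}$ and then $X_1+X_2$ is aggregated with $X_3$ via the normal copula with correlation $\rho_\varnothing$. *)

theory Defs
  imports "HOL-Probability.Probability"
begin

text \<open>A (possibly degenerate) centred multivariate normal random vector (X1,X2,X3) on the
probability space M: it is a linear image X = A Z of a vector Z = (Z0,Z1,Z2) of independent
standard normal random variables.\<close>
definition centered_mvn3 ::
  "'a measure \<Rightarrow> ('a \<Rightarrow> real) \<Rightarrow> ('a \<Rightarrow> real) \<Rightarrow> ('a \<Rightarrow> real) \<Rightarrow> bool" where
  "centered_mvn3 M X1 X2 X3 \<longleftrightarrow>
     prob_space M \<and>
     (\<exists>(Z :: nat \<Rightarrow> 'a \<Rightarrow> real) (A :: nat \<Rightarrow> nat \<Rightarrow> real).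
        prob_space.indep_vars M (\<lambda>_. borel) Z {0, 1, 2} \<and>
        (\<forall>j \<in> {0, 1, 2}. distributed M lborel (Z j) (\<lambda>x. ennreal (std_normal_density x))) \<and>
        (\<forall>x \<in> space M.
           X1 x = A 1 0 * Z 0 x + A 1 1 * Z 1 x + A 1 2 * Z 2 x \<and>
           X2 x = A 2 0 * Z 0 x + A 2 1 * Z 1 x + A 2 2 * Z 2 x \<and>
           X3 x = A 3 0 * Z 0 x + A 3 1 * Z 1 x + A 3 2 * Z 2 x))"

definition covariance :: "'a measure \<Rightarrow> ('a \<Rightarrow> real) \<Rightarrow> ('a \<Rightarrow> real) \<Rightarrow> real" where
  "covariance M X Y =
     (\<integral>x. (X x - (\<integral>y. X y \<partial>M)) * (Y x - (\<integral>y. Y y \<partial>M)) \<partial>M)"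

definition correlation :: "'a measure \<Rightarrow> ('a \<Rightarrow> real) \<Rightarrow> ('a \<Rightarrow> real) \<Rightarrow> real" where
  "correlation M X Y = covariance M X Y / sqrt (covariance M X X * covariance M Y Y)"

end

theory Submission
  imports Defs
begin

(*
  Write each X_i = a_i . Z with Z a standard normal vector in R^3. The covariance matrix of
  (X1, X2, X3) is then the Gram matrix of the rows a_i, whose determinant is the square of
  det (a_1, a_2, a_3). The two prescribed correlations fix every covariance entry except
  cov (X1, X3) = r sigma1 sigma3, and the Gram determinant equals
  sigma1^2 sigma3^2 (sigma2^2 (1 - rho12^2) (1 - rho0^2) - (s r - (sigma1 + rho12 sigma2) rho0)^2),
  with s^2 = Var (X1 + X2); nonnegativity is exactly the stated interval. Conversely, for r in
  the interval, a1 = (sigma1, 0, 0), a2 = sigma2 (rho12, sqrt (1 - rho12^2), 0) and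
  a3 = sigma3 (r, y, z) with a suitable unit vector (r, y, z) realise all constraints.
*)

context prob_space
begin

lemma indep_std_normal_moments:
  assumes ind: "indep_vars (\<lambda>_. borel) Z J"
    and std: "\<forall>j\<in>J. distributed M lborel (Z j) (\<lambda>x. ennreal (std_normal_density x))"
    and j: "j \<in> J" and k: "k \<in> J"
  shows "integrable M (Z j)" "expectation (Z j) = 0"
    "integrable M (\<lambda>x. Z j x * Z k x)"
    "expectation (\<lambda>x. Z j x * Z k x) = (if j = k then 1 else 0)"
proof -
  have integrable: "integrable M (Z i)" and centred: "expectation (Z i) = 0" if "i \<in> J" for i
    using distributed_integrable[OF std[rule_format, OF that], of "\<lambda>x. x"]
      distributed_integral[OF std[rule_format, OF that], of "\<lambda>x. x"]
      integrable_std_normal_moment[of 1] integral_std_normal_moment_odd[of 0]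
    by simp_all
  show "integrable M (Z j)" "expectation (Z j) = 0"
    using integrable centred j by auto
  have "integrable M (\<lambda>x. Z j x * Z k x) \<and>
      expectation (\<lambda>x. Z j x * Z k x) = (if j = k then 1 else 0)"
  proof (cases "j = k")
    case True
    then show ?thesis
      using distributed_integrable[OF std[rule_format, OF j], of "\<lambda>x. x\<^sup>2"]
        distributed_integral[OF std[rule_format, OF j], of "\<lambda>x. x\<^sup>2"]
        integrable_std_normal_moment[of 2] integral_std_normal_moment_even[of 1]
      by (simp add: power2_eq_square)
  next
    case False
    have ind_jk: "indep_vars (\<lambda>_. borel) Z {j, k}"
      using indep_vars_subset[OF ind] j k by simp
    have "integrable M (\<lambda>x. \<Prod>i\<in>{j, k}. Z i x)"
      by (rule indep_vars_integrable[OF _ ind_jk]) (use integrable j k in auto)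
    moreover have "expectation (\<lambda>x. \<Prod>i\<in>{j, k}. Z i x) = (\<Prod>i\<in>{j, k}. expectation (Z i))"
      by (rule indep_vars_lebesgue_integral[OF _ ind_jk]) (use integrable j k in auto)
    ultimately show ?thesis
      using False centred j by simp
  qed
  then show "integrable M (\<lambda>x. Z j x * Z k x)"
    "expectation (\<lambda>x. Z j x * Z k x) = (if j = k then 1 else 0)" by simp_all
qed

lemma expectation_indep_std_normal_sum:
  assumes "finite J" "indep_vars (\<lambda>_. borel) Z J"
    and "\<forall>j\<in>J. distributed M lborel (Z j) (\<lambda>x. ennreal (std_normal_density x))"
    and X: "\<forall>x\<in>space M. X x = (\<Sum>j\<in>J. a j * Z j x)"
  shows "expectation X = 0"
proof -
  have "expectation X = expectation (\<lambda>x. \<Sum>j\<in>J. a j * Z j x)"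
    by (rule Bochner_Integration.integral_cong) (use X in auto)
  also have "\<dots> = (\<Sum>j\<in>J. a j * expectation (Z j))"
    using indep_std_normal_moments(1)[OF assms(2,3)] by (simp add: Bochner_Integration.integral_sum)
  finally show ?thesis
    using indep_std_normal_moments(2)[OF assms(2,3)] by simp
qed

lemma covariance_indep_std_normal_sums:
  assumes "finite J" "indep_vars (\<lambda>_. borel) Z J"
    and "\<forall>j\<in>J. distributed M lborel (Z j) (\<lambda>x. ennreal (std_normal_density x))"
    and X: "\<forall>x\<in>space M. X x = (\<Sum>j\<in>J. a j * Z j x)"
    and Y: "\<forall>x\<in>space M. Y x = (\<Sum>j\<in>J. b j * Z j x)"
  shows "covariance M X Y = (\<Sum>j\<in>J. a j * b j)"
proof -
  note moments = indep_std_normal_moments[OF assms(2,3)]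
  have "expectation X = 0" "expectation Y = 0"
    using expectation_indep_std_normal_sum[OF assms(1-3)] X Y by blast+
  then have "covariance M X Y = expectation (\<lambda>x. X x * Y x)"
    by (simp add: covariance_def)
  also have "\<dots> = expectation (\<lambda>x. \<Sum>j\<in>J. \<Sum>k\<in>J. a j * b k * (Z j x * Z k x))"
    by (rule Bochner_Integration.integral_cong) (use X Y in \<open>auto simp: sum_product ac_simps\<close>)
  also have "\<dots> = (\<Sum>j\<in>J. \<Sum>k\<in>J. a j * b k * expectation (\<lambda>x. Z j x * Z k x))"
    using moments(3) by (simp add: Bochner_Integration.integral_sum)
  also have "\<dots> = (\<Sum>j\<in>J. \<Sum>k\<in>J. if j = k then a j * b k else 0)"
    using moments(4) by (intro sum.cong) auto
  also have "\<dots> = (\<Sum>j\<in>J. a j * b j)"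
    using \<open>finite J\<close> by simp
  finally show ?thesis .
qed

lemma distributed_indep_std_normal_sum:
  assumes "finite J" and ind: "indep_vars (\<lambda>_. borel) Z J"
    and std: "\<forall>j\<in>J. distributed M lborel (Z j) (\<lambda>x. ennreal (std_normal_density x))"
    and pos: "(\<Sum>j\<in>J. a j * a j) > 0"
  shows "distributed M lborel (\<lambda>x. \<Sum>j\<in>J. a j * Z j x)
           (\<lambda>x. ennreal (normal_density 0 (sqrt (\<Sum>j\<in>J. a j * a j)) x))"
proof -
  \<comment> \<open>\<open>sum_indep_normal\<close> needs positive standard deviations, so zero coefficients are dropped.\<close>
  define I where "I = {j\<in>J. a j \<noteq> 0}"
  have "I \<noteq> {}"
    using pos by (auto simp: I_def intro: ccontr)
  have "indep_vars (\<lambda>_. borel) (\<lambda>j x. a j * Z j x) I"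
    by (rule indep_vars_subset[OF indep_vars_compose2[OF ind]]) (auto simp: I_def)
  moreover have "distributed M lborel (\<lambda>x. a j * Z j x) (normal_density 0 \<bar>a j\<bar>)" if "j \<in> I" for j
    using normal_density_affine[of "Z j" 0 1 "a j" 0] std that by (simp add: I_def)
  ultimately have "distributed M lborel (\<lambda>x. \<Sum>j\<in>I. a j * Z j x)
      (normal_density (\<Sum>j\<in>I. 0) (sqrt (\<Sum>j\<in>I. \<bar>a j\<bar>\<^sup>2)))"
    using \<open>finite J\<close> \<open>I \<noteq> {}\<close> by (intro sum_indep_normal) (auto simp: I_def)
  moreover have "(\<Sum>j\<in>I. a j * Z j x) = (\<Sum>j\<in>J. a j * Z j x)" for x
    using \<open>finite J\<close> by (intro sum.mono_neutral_left) (auto simp: I_def)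
  moreover have "(\<Sum>j\<in>I. \<bar>a j\<bar>\<^sup>2) = (\<Sum>j\<in>J. a j * a j)"
    using \<open>finite J\<close> by (simp add: power2_eq_square, intro sum.mono_neutral_left) (auto simp: I_def)
  ultimately show ?thesis
    by simp
qed

lemma covariance_self_normal:
  assumes "\<sigma> > 0" "distributed M lborel X (\<lambda>x. ennreal (normal_density \<mu> \<sigma> x))"
  shows "covariance M X X = \<sigma>\<^sup>2"
  using normal_distributed_variance[OF assms] by (simp add: covariance_def power2_eq_square)

lemma correlation_indep_std_normal_sums:
  assumes "finite J" "indep_vars (\<lambda>_. borel) Z J"
    and "\<forall>j\<in>J. distributed M lborel (Z j) (\<lambda>x. ennreal (std_normal_density x))"
    and "\<forall>x\<in>space M. X x = (\<Sum>j\<in>J. a j * Z j x)"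
    and "\<forall>x\<in>space M. Y x = (\<Sum>j\<in>J. b j * Z j x)"
  shows "correlation M X Y = (\<Sum>j\<in>J. a j * b j) / sqrt ((\<Sum>j\<in>J. a j * a j) * (\<Sum>j\<in>J. b j * b j))"
  using covariance_indep_std_normal_sums[OF assms(1-3) assms(4) assms(5)]
    covariance_indep_std_normal_sums[OF assms(1-3) assms(4) assms(4)]
    covariance_indep_std_normal_sums[OF assms(1-3) assms(5) assms(5)]
  by (simp add: correlation_def)

end

lemma indep_vars_distr_iff:
  assumes "prob_space P" and g: "g \<in> measurable P T" and "I \<noteq> {}"
    and X: "\<And>i. i \<in> I \<Longrightarrow> X i \<in> measurable T (N i)"
  shows "prob_space.indep_vars (distr P T g) N X I \<longleftrightarrow>
    prob_space.indep_vars P N (\<lambda>i. X i \<circ> g) I"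
proof -
  interpret P: prob_space P by fact
  interpret D: prob_space "distr P T g"
    using P.prob_space_distr[OF g] .
  have "(\<lambda>x. \<lambda>i\<in>I. X i x) \<in> measurable T (\<Pi>\<^sub>M i\<in>I. N i)"
    using X by (intro measurable_restrict) auto
  then have "distr (distr P T g) (\<Pi>\<^sub>M i\<in>I. N i) (\<lambda>x. \<lambda>i\<in>I. X i x) =
      distr P (\<Pi>\<^sub>M i\<in>I. N i) (\<lambda>x. \<lambda>i\<in>I. (X i \<circ> g) x)"
    using g by (simp add: distr_distr comp_def)
  moreover have "distr (distr P T g) (N i) (X i) = distr P (N i) (X i \<circ> g)" if "i \<in> I" for i
    using X[OF that] g by (simp add: distr_distr)
  ultimately show ?thesis
    using X g \<open>I \<noteq> {}\<close>
    by (simp add: D.indep_vars_iff_distr_eq_PiM' P.indep_vars_iff_distr_eq_PiM' cong: PiM_cong)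
qed

lemma indep_vars_PiM_coordinates:
  assumes "\<And>i. i \<in> I \<Longrightarrow> prob_space (M i)" and "I \<noteq> {}"
  shows "prob_space.indep_vars (\<Pi>\<^sub>M i\<in>I. M i) M (\<lambda>i \<omega>. \<omega> i) I"
proof -
  interpret P: prob_space "\<Pi>\<^sub>M i\<in>I. M i"
    using assms(1) by (rule prob_space_PiM)
  have "distr (\<Pi>\<^sub>M i\<in>I. M i) (\<Pi>\<^sub>M i\<in>I. M i) (\<lambda>\<omega>. \<lambda>i\<in>I. \<omega> i) =
      distr (\<Pi>\<^sub>M i\<in>I. M i) (\<Pi>\<^sub>M i\<in>I. M i) (\<lambda>\<omega>. \<omega>)"
    by (rule distr_cong) (auto simp: space_PiM PiE_def extensional_restrict)
  then show ?thesis
    using assms by (simp add: P.indep_vars_iff_distr_eq_PiM' distr_PiM_component cong: PiM_cong)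
qed

definition triple_coord :: "nat \<Rightarrow> real \<times> real \<times> real \<Rightarrow> real" where
  "triple_coord j w = (if j = 0 then fst w else if j = 1 then fst (snd w) else snd (snd w))"

lemma measurable_triple_coord [measurable]:
  "triple_coord j \<in> borel_measurable (borel \<Otimes>\<^sub>M borel \<Otimes>\<^sub>M borel)"
  unfolding triple_coord_def by measurable

lemma exists_indep_std_normal_triple:
  "\<exists>M :: (real \<times> real \<times> real) measure. prob_space M \<and>
     prob_space.indep_vars M (\<lambda>_. borel) triple_coord {0, 1, 2} \<and>
     (\<forall>j\<in>{0, 1, 2}. distributed M lborel (triple_coord j) (\<lambda>x. ennreal (std_normal_density x)))"
proof -
  define N where "N = density lborel (\<lambda>x. ennreal (std_normal_density x))"
  define P where "P = (\<Pi>\<^sub>M i\<in>{0, 1, 2 :: nat}. N)"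
  define g where "g \<omega> = (\<omega> 0, \<omega> 1, \<omega> 2)" for \<omega> :: "nat \<Rightarrow> real"
  have N: "prob_space N" "sets N = sets borel"
    unfolding N_def by (simp_all add: prob_space_normal_density)
  then have P: "prob_space P"
    unfolding P_def by (intro prob_space_PiM) auto
  have "sets P = sets (\<Pi>\<^sub>M i\<in>{0, 1, 2 :: nat}. (borel :: real measure))"
    unfolding P_def by (rule sets_PiM_cong) (auto simp: N)
  then have g: "g \<in> measurable P (borel \<Otimes>\<^sub>M borel \<Otimes>\<^sub>M borel)"
    unfolding measurable_cong_sets[OF _ refl] g_def by measurable
  have coord: "triple_coord j \<circ> g = (\<lambda>\<omega>. \<omega> j)" if "j \<in> {0, 1, 2}" for j
    using that by (auto simp: triple_coord_def g_def)
  define M where "M = distr P (borel \<Otimes>\<^sub>M borel \<Otimes>\<^sub>M borel) g"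
  have "prob_space.indep_vars P (\<lambda>_. N) (\<lambda>j. triple_coord j \<circ> g) {0, 1, 2} \<longleftrightarrow>
      prob_space.indep_vars P (\<lambda>_. N) (\<lambda>j \<omega>. \<omega> j) {0, 1, 2}"
    using coord by (intro prob_space.indep_vars_cong[OF P]) auto
  then have "prob_space.indep_vars P (\<lambda>_. N) (\<lambda>j. triple_coord j \<circ> g) {0, 1, 2}"
    using indep_vars_PiM_coordinates[of "{0, 1, 2 :: nat}" "\<lambda>_. N"] N(1) by (simp add: P_def)
  then have "prob_space.indep_vars M (\<lambda>_. N) triple_coord {0, 1, 2}"
    unfolding M_def by (subst indep_vars_distr_iff[OF P g]) (auto simp: measurable_cong_sets[OF refl N(2)])
  moreover have "distr M lborel (triple_coord j) = N" if "j \<in> {0, 1, 2}" for j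
  proof -
    have "distr M lborel (triple_coord j) = distr M N (triple_coord j)"
      using N(2) by (intro distr_cong) auto
    also have "\<dots> = distr P N (\<lambda>\<omega>. \<omega> j)"
      using g coord[OF that] by (simp add: M_def distr_distr measurable_cong_sets[OF refl N(2)])
    also have "\<dots> = N"
      using distr_PiM_component[of "{0, 1, 2}" "\<lambda>_. N" j] N(1) that by (simp add: P_def)
    finally show ?thesis .
  qed
  moreover have "prob_space M"
    unfolding M_def using prob_space.prob_space_distr[OF P g] .
  ultimately show ?thesis
    using N(2) measurable_cong_sets[OF refl N(2)]
    by (auto simp: prob_space.indep_vars_def2 distributed_def N_def[symmetric] M_def intro!: exI[of _ M])
qed

definition dot3 :: "(nat \<Rightarrow> real) \<Rightarrow> (nat \<Rightarrow> real) \<Rightarrow> real" where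
  "dot3 a b = a 0 * b 0 + a 1 * b 1 + a 2 * b 2"

lemma dot3_eq_sum: "dot3 a b = (\<Sum>j\<in>{0, 1, 2}. a j * b j)"
  by (simp add: dot3_def)

lemma dot3_add_self:
  "dot3 (\<lambda>j. a j + b j) (\<lambda>j. a j + b j) = dot3 a a + dot3 b b + 2 * dot3 a b"
  by (simp add: dot3_def algebra_simps)

lemma dot3_add_left: "dot3 (\<lambda>j. a j + b j) c = dot3 a c + dot3 b c"
  by (simp add: dot3_def algebra_simps)

lemma gram_det3_nonneg:
  "dot3 a a * dot3 b b * dot3 c c + 2 * dot3 a b * dot3 a c * dot3 b c
     - dot3 a a * (dot3 b c)\<^sup>2 - dot3 b b * (dot3 a c)\<^sup>2 - dot3 c c * (dot3 a b)\<^sup>2 \<ge> 0"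
proof -
  have "dot3 a a * dot3 b b * dot3 c c + 2 * dot3 a b * dot3 a c * dot3 b c
     - dot3 a a * (dot3 b c)\<^sup>2 - dot3 b b * (dot3 a c)\<^sup>2 - dot3 c c * (dot3 a b)\<^sup>2 =
    (a 0 * (b 1 * c 2 - b 2 * c 1) - a 1 * (b 0 * c 2 - b 2 * c 0) + a 2 * (b 0 * c 1 - b 1 * c 0))\<^sup>2"
    by (simp add: dot3_def power2_eq_square algebra_simps)
  then show ?thesis
    by simp
qed

lemma tree_bound_of_gram_det_nonneg:
  fixes \<sigma>1 \<sigma>2 \<sigma>3 \<rho>12 \<rho>0 r s p12 p13 p23 :: real
  assumes "\<sigma>1 > 0" "\<sigma>3 > 0"
    and gram: "\<sigma>1\<^sup>2 * \<sigma>2\<^sup>2 * \<sigma>3\<^sup>2 + 2 * p12 * p13 * p23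
      - \<sigma>1\<^sup>2 * p23\<^sup>2 - \<sigma>2\<^sup>2 * p13\<^sup>2 - \<sigma>3\<^sup>2 * p12\<^sup>2 \<ge> 0"
    and p12: "p12 = \<rho>12 * \<sigma>1 * \<sigma>2" and p23: "p13 + p23 = \<rho>0 * s * \<sigma>3"
    and p13: "p13 = r * \<sigma>1 * \<sigma>3" and s: "s\<^sup>2 = \<sigma>1\<^sup>2 + \<sigma>2\<^sup>2 + 2 * \<rho>12 * \<sigma>1 * \<sigma>2"
  shows "(s * r - (\<sigma>1 + \<rho>12 * \<sigma>2) * \<rho>0)\<^sup>2 \<le> \<sigma>2\<^sup>2 * (1 - \<rho>12\<^sup>2) * (1 - \<rho>0\<^sup>2)"
proof -
  have "\<sigma>1\<^sup>2 * \<sigma>2\<^sup>2 * \<sigma>3\<^sup>2 + 2 * p12 * p13 * p23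
      - \<sigma>1\<^sup>2 * p23\<^sup>2 - \<sigma>2\<^sup>2 * p13\<^sup>2 - \<sigma>3\<^sup>2 * p12\<^sup>2 =
    \<sigma>1\<^sup>2 * \<sigma>3\<^sup>2 * (\<sigma>2\<^sup>2 * (1 - \<rho>12\<^sup>2) * (1 - \<rho>0\<^sup>2) - (s * r - (\<sigma>1 + \<rho>12 * \<sigma>2) * \<rho>0)\<^sup>2)"
  proof -
    have "p23 = \<rho>0 * s * \<sigma>3 - r * \<sigma>1 * \<sigma>3"
      using p13 p23 by simp
    then show ?thesis
      unfolding p12 p13 using s by algebra
  qed
  moreover have "\<sigma>1\<^sup>2 * \<sigma>3\<^sup>2 > 0"
    using assms(1,2) by simp
  ultimately show ?thesis
    using gram by (simp add: zero_le_mult_iff)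
qed

lemma exists_unit_vector_with_projection:
  fixes \<sigma>1 \<sigma>2 \<rho>12 \<rho>0 r s :: real
  assumes "\<sigma>2 > 0" "\<rho>12\<^sup>2 \<le> 1" "\<rho>0\<^sup>2 \<le> 1" "s > 0"
    and s: "s\<^sup>2 = \<sigma>1\<^sup>2 + \<sigma>2\<^sup>2 + 2 * \<rho>12 * \<sigma>1 * \<sigma>2"
    and bound: "(s * r - (\<sigma>1 + \<rho>12 * \<sigma>2) * \<rho>0)\<^sup>2 \<le> \<sigma>2\<^sup>2 * (1 - \<rho>12\<^sup>2) * (1 - \<rho>0\<^sup>2)"
  shows "\<exists>y z. (\<sigma>1 + \<rho>12 * \<sigma>2) * r + \<sigma>2 * sqrt (1 - \<rho>12\<^sup>2) * y = \<rho>0 * s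
    \<and> r\<^sup>2 + y\<^sup>2 + z\<^sup>2 = 1"
proof -
  define t where "t = \<sigma>1 + \<rho>12 * \<sigma>2"
  define c where "c = sqrt (1 - \<rho>12\<^sup>2)"
  have c: "c\<^sup>2 = 1 - \<rho>12\<^sup>2"
    using assms(2) by (simp add: c_def)
  have st: "s\<^sup>2 - t\<^sup>2 = \<sigma>2\<^sup>2 * c\<^sup>2"
    unfolding s t_def c by (simp add: power2_eq_square algebra_simps)
  have bound': "(s * r - t * \<rho>0)\<^sup>2 \<le> \<sigma>2\<^sup>2 * c\<^sup>2 * (1 - \<rho>0\<^sup>2)"
    using bound by (simp only: t_def c)
  obtain y where y: "t * r + \<sigma>2 * c * y = \<rho>0 * s" and "r\<^sup>2 + y\<^sup>2 \<le> 1"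
  proof (cases "c = 0")
    case True
    then have sr: "s * r = t * \<rho>0" and "s\<^sup>2 = t\<^sup>2"
      using bound' st by simp_all
    then have "s * (t * r) = s * (\<rho>0 * s)"
      by (simp add: power2_eq_square algebra_simps)
    moreover have "s\<^sup>2 * r\<^sup>2 = s\<^sup>2 * \<rho>0\<^sup>2"
      using sr \<open>s\<^sup>2 = t\<^sup>2\<close> by (metis power_mult_distrib mult.commute)
    ultimately show ?thesis
      using that[of 0] True \<open>s > 0\<close> \<open>\<rho>0\<^sup>2 \<le> 1\<close> by simp
  next
    case False
    define y where "y = (\<rho>0 * s - t * r) / (\<sigma>2 * c)"
    have "\<sigma>2\<^sup>2 * c\<^sup>2 * (r\<^sup>2 + y\<^sup>2) = \<sigma>2\<^sup>2 * c\<^sup>2 * r\<^sup>2 + (\<rho>0 * s - t * r)\<^sup>2"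
      using False \<open>\<sigma>2 > 0\<close> by (simp add: y_def power_divide power_mult_distrib algebra_simps)
    also have "\<dots> = (s * r - t * \<rho>0)\<^sup>2 + \<rho>0\<^sup>2 * (s\<^sup>2 - t\<^sup>2)"
      unfolding st[symmetric] by (simp add: power2_eq_square algebra_simps)
    also have "\<dots> \<le> \<sigma>2\<^sup>2 * c\<^sup>2"
      using bound' unfolding st by (simp add: algebra_simps)
    finally have "r\<^sup>2 + y\<^sup>2 \<le> 1"
      using False \<open>\<sigma>2 > 0\<close> by simp
    moreover have "t * r + \<sigma>2 * c * y = \<rho>0 * s"
      using False \<open>\<sigma>2 > 0\<close> by (simp add: y_def)
    ultimately show ?thesis
      using that by blast
  qed
  then show ?thesis
    by (intro exI[of _ y] exI[of _ "sqrt (1 - r\<^sup>2 - y\<^sup>2)"]) (simp add: t_def c_def)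
qed

lemma quadratic_bound_iff_interval:
  fixes s r m D :: real
  assumes "s > 0" "D \<ge> 0"
  shows "(s * r - m)\<^sup>2 \<le> D \<longleftrightarrow> r \<in> {m / s - sqrt D / s .. m / s + sqrt D / s}"
proof -
  have "(s * r - m)\<^sup>2 \<le> D \<longleftrightarrow> \<bar>s * r - m\<bar> \<le> sqrt D"
    by (metis abs_ge_zero real_le_rsqrt real_sqrt_abs real_sqrt_le_iff)
  also have "\<dots> \<longleftrightarrow> m - sqrt D \<le> s * r \<and> s * r \<le> m + sqrt D"
    by linarith
  also have "\<dots> \<longleftrightarrow> r \<in> {m / s - sqrt D / s .. m / s + sqrt D / s}"
    using assms(1) by (auto simp: field_simps)
  finally show ?thesis .
qed

lemma (in prob_space) tree_correlations_of_rows: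
  assumes ind: "indep_vars (\<lambda>_. borel) Z {0, 1, 2}"
    and std: "\<forall>j\<in>{0, 1, 2}. distributed M lborel (Z j) (\<lambda>x. ennreal (std_normal_density x))"
    and X1: "\<forall>x\<in>space M. X1 x = (\<Sum>j\<in>{0, 1, 2}. a1 j * Z j x)"
    and X2: "\<forall>x\<in>space M. X2 x = (\<Sum>j\<in>{0, 1, 2}. a2 j * Z j x)"
    and X3: "\<forall>x\<in>space M. X3 x = (\<Sum>j\<in>{0, 1, 2}. a3 j * Z j x)"
    and "\<sigma>1 > 0" "\<sigma>2 > 0" "\<sigma>3 > 0"
    and norms: "dot3 a1 a1 = \<sigma>1\<^sup>2" "dot3 a2 a2 = \<sigma>2\<^sup>2" "dot3 a3 a3 = \<sigma>3\<^sup>2"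
  shows "correlation M X1 X2 = dot3 a1 a2 / (\<sigma>1 * \<sigma>2)"
    and "correlation M X1 X3 = dot3 a1 a3 / (\<sigma>1 * \<sigma>3)"
    and "correlation M (\<lambda>x. X1 x + X2 x) X3 =
      (dot3 a1 a3 + dot3 a2 a3) / (sqrt (\<sigma>1\<^sup>2 + \<sigma>2\<^sup>2 + 2 * dot3 a1 a2) * \<sigma>3)"
proof -
  have X12: "\<forall>x\<in>space M. X1 x + X2 x = (\<Sum>j\<in>{0, 1, 2}. (a1 j + a2 j) * Z j x)"
    using X1 X2 by (simp add: algebra_simps)
  have cor: "correlation M X Y = dot3 a b / sqrt (dot3 a a * dot3 b b)"
    if "\<forall>x\<in>space M. X x = (\<Sum>j\<in>{0, 1, 2}. a j * Z j x)"
      "\<forall>x\<in>space M. Y x = (\<Sum>j\<in>{0, 1, 2}. b j * Z j x)" for X Y a b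
    using correlation_indep_std_normal_sums[OF _ ind std that] by (simp add: dot3_eq_sum)
  show "correlation M X1 X2 = dot3 a1 a2 / (\<sigma>1 * \<sigma>2)"
    using cor[OF X1 X2] norms \<open>\<sigma>1 > 0\<close> \<open>\<sigma>2 > 0\<close> by (simp add: real_sqrt_mult)
  show "correlation M X1 X3 = dot3 a1 a3 / (\<sigma>1 * \<sigma>3)"
    using cor[OF X1 X3] norms \<open>\<sigma>1 > 0\<close> \<open>\<sigma>3 > 0\<close> by (simp add: real_sqrt_mult)
  show "correlation M (\<lambda>x. X1 x + X2 x) X3 =
      (dot3 a1 a3 + dot3 a2 a3) / (sqrt (\<sigma>1\<^sup>2 + \<sigma>2\<^sup>2 + 2 * dot3 a1 a2) * \<sigma>3)"
    using cor[OF X12 X3] norms \<open>\<sigma>3 > 0\<close>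
    by (simp add: dot3_add_self dot3_add_left real_sqrt_mult)
qed

definition gaussian_tree_correlations :: "real \<Rightarrow> real \<Rightarrow> real \<Rightarrow> real \<Rightarrow> real \<Rightarrow> real set" where
  "gaussian_tree_correlations \<sigma>1 \<sigma>2 \<sigma>3 \<rho>12 \<rho>0 =
     {correlation M X1 X3 | (M :: (real \<times> real \<times> real) measure) X1 X2 X3.
        centered_mvn3 M X1 X2 X3 \<and>
        distributed M lborel X1 (\<lambda>x. ennreal (normal_density 0 \<sigma>1 x)) \<and>
        distributed M lborel X2 (\<lambda>x. ennreal (normal_density 0 \<sigma>2 x)) \<and>
        distributed M lborel X3 (\<lambda>x. ennreal (normal_density 0 \<sigma>3 x)) \<and>
        correlation M X1 X2 = \<rho>12 \<and>
        correlation M (\<lambda>x. X1 x + X2 x) X3 = \<rho>0}"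

lemma gaussian_tree_correlation_bound:
  fixes M :: "'a measure" and \<sigma>1 \<sigma>2 \<sigma>3 \<rho>12 \<rho>0 s :: real
  assumes pos: "\<sigma>1 > 0" "\<sigma>2 > 0" "\<sigma>3 > 0"
    and s: "s = sqrt (\<sigma>1\<^sup>2 + \<sigma>2\<^sup>2 + 2 * \<rho>12 * \<sigma>1 * \<sigma>2)" "s > 0"
    and mvn: "centered_mvn3 M X1 X2 X3"
    and d1: "distributed M lborel X1 (\<lambda>x. ennreal (normal_density 0 \<sigma>1 x))"
    and d2: "distributed M lborel X2 (\<lambda>x. ennreal (normal_density 0 \<sigma>2 x))"
    and d3: "distributed M lborel X3 (\<lambda>x. ennreal (normal_density 0 \<sigma>3 x))"
    and c12: "correlation M X1 X2 = \<rho>12"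
    and c0: "correlation M (\<lambda>x. X1 x + X2 x) X3 = \<rho>0"
  shows "(s * correlation M X1 X3 - (\<sigma>1 + \<rho>12 * \<sigma>2) * \<rho>0)\<^sup>2
    \<le> \<sigma>2\<^sup>2 * (1 - \<rho>12\<^sup>2) * (1 - \<rho>0\<^sup>2)"
proof -
  from mvn obtain Z :: "nat \<Rightarrow> 'a \<Rightarrow> real" and A :: "nat \<Rightarrow> nat \<Rightarrow> real"
    where P: "prob_space M"
      and ind: "prob_space.indep_vars M (\<lambda>_. borel) Z {0, 1, 2}"
      and std: "\<forall>j\<in>{0, 1, 2}. distributed M lborel (Z j) (\<lambda>x. ennreal (std_normal_density x))"
      and X: "\<forall>x\<in>space M.
           X1 x = A 1 0 * Z 0 x + A 1 1 * Z 1 x + A 1 2 * Z 2 x \<and>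
           X2 x = A 2 0 * Z 0 x + A 2 1 * Z 1 x + A 2 2 * Z 2 x \<and>
           X3 x = A 3 0 * Z 0 x + A 3 1 * Z 1 x + A 3 2 * Z 2 x"
    unfolding centered_mvn3_def by blast
  interpret prob_space M by fact
  have rows: "\<forall>x\<in>space M. X1 x = (\<Sum>j\<in>{0, 1, 2}. A 1 j * Z j x)"
    "\<forall>x\<in>space M. X2 x = (\<Sum>j\<in>{0, 1, 2}. A 2 j * Z j x)"
    "\<forall>x\<in>space M. X3 x = (\<Sum>j\<in>{0, 1, 2}. A 3 j * Z j x)"
    using X by (simp_all add: add.assoc)
  have norm: "dot3 (A i) (A i) = \<sigma>\<^sup>2"
    if "\<forall>x\<in>space M. X x = (\<Sum>j\<in>{0, 1, 2}. A i j * Z j x)" "\<sigma> > 0"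
      "distributed M lborel X (\<lambda>x. ennreal (normal_density 0 \<sigma> x))" for X i \<sigma>
    using covariance_self_normal[OF that(2,3)] covariance_indep_std_normal_sums[OF _ ind std that(1) that(1)]
    by (simp add: dot3_eq_sum)
  note cor = tree_correlations_of_rows[OF ind std rows pos
      norm[OF rows(1) pos(1) d1] norm[OF rows(2) pos(2) d2] norm[OF rows(3) pos(3) d3]]
  have p12: "dot3 (A 1) (A 2) = \<rho>12 * \<sigma>1 * \<sigma>2"
    using cor(1) c12 pos by (simp add: field_simps)
  have "\<rho>0 = (dot3 (A 1) (A 3) + dot3 (A 2) (A 3)) / (s * \<sigma>3)"
    using cor(3) c0 unfolding p12 s(1) by (simp add: ac_simps)
  then have p23: "dot3 (A 1) (A 3) + dot3 (A 2) (A 3) = \<rho>0 * s * \<sigma>3"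
    using pos s(2) by (simp add: field_simps)
  have p13: "dot3 (A 1) (A 3) = correlation M X1 X3 * \<sigma>1 * \<sigma>3"
    using cor(2) pos by (simp add: field_simps)
  show ?thesis
    using gram_det3_nonneg[of "A 1" "A 2" "A 3"] pos s
    unfolding norm[OF rows(1) pos(1) d1] norm[OF rows(2) pos(2) d2] norm[OF rows(3) pos(3) d3]
    by (intro tree_bound_of_gram_det_nonneg[OF pos(1,3) _ p12 p23 p13]) auto
qed

lemma gaussian_tree_correlation_realisable:
  fixes \<sigma>1 \<sigma>2 \<sigma>3 \<rho>12 \<rho>0 r s :: real
  assumes pos: "\<sigma>1 > 0" "\<sigma>2 > 0" "\<sigma>3 > 0" and "\<rho>12\<^sup>2 \<le> 1" "\<rho>0\<^sup>2 \<le> 1"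
    and s: "s = sqrt (\<sigma>1\<^sup>2 + \<sigma>2\<^sup>2 + 2 * \<rho>12 * \<sigma>1 * \<sigma>2)" "s > 0"
    and bound: "(s * r - (\<sigma>1 + \<rho>12 * \<sigma>2) * \<rho>0)\<^sup>2 \<le> \<sigma>2\<^sup>2 * (1 - \<rho>12\<^sup>2) * (1 - \<rho>0\<^sup>2)"
  shows "r \<in> gaussian_tree_correlations \<sigma>1 \<sigma>2 \<sigma>3 \<rho>12 \<rho>0"
proof -
  define c where "c = sqrt (1 - \<rho>12\<^sup>2)"
  have s2: "s\<^sup>2 = \<sigma>1\<^sup>2 + \<sigma>2\<^sup>2 + 2 * \<rho>12 * \<sigma>1 * \<sigma>2"
    using s by simp
  obtain y z where y: "(\<sigma>1 + \<rho>12 * \<sigma>2) * r + \<sigma>2 * c * y = \<rho>0 * s"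
    and yz: "r\<^sup>2 + y\<^sup>2 + z\<^sup>2 = 1"
    using exists_unit_vector_with_projection[OF pos(2) assms(4,5) s(2) s2 bound] unfolding c_def by blast
  obtain M :: "(real \<times> real \<times> real) measure" where "prob_space M"
    and ind: "prob_space.indep_vars M (\<lambda>_. borel) triple_coord {0, 1, 2}"
    and std: "\<forall>j\<in>{0, 1, 2}. distributed M lborel (triple_coord j) (\<lambda>x. ennreal (std_normal_density x))"
    using exists_indep_std_normal_triple by blast
  interpret prob_space M by fact
  define A :: "nat \<Rightarrow> nat \<Rightarrow> real" where
    "A i j = (if i = 1 then (if j = 0 then \<sigma>1 else 0)
      else if i = 2 then (if j = 0 then \<rho>12 * \<sigma>2 else if j = 1 then \<sigma>2 * c else 0)
      else \<sigma>3 * (if j = 0 then r else if j = 1 then y else z))" for i j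
  define X where "X i w = (\<Sum>j\<in>{0, 1, 2}. A i j * triple_coord j w)" for i w
  have rows: "\<forall>w\<in>space M. X i w = (\<Sum>j\<in>{0, 1, 2}. A i j * triple_coord j w)" for i
    by (simp add: X_def)
  have "c\<^sup>2 = 1 - \<rho>12\<^sup>2"
    using assms(4) by (simp add: c_def)
  moreover have "dot3 (A 2) (A 2) = \<sigma>2\<^sup>2 * (\<rho>12\<^sup>2 + c\<^sup>2)"
    "dot3 (A 3) (A 3) = \<sigma>3\<^sup>2 * (r\<^sup>2 + y\<^sup>2 + z\<^sup>2)"
    by (simp_all add: dot3_def A_def power2_eq_square algebra_simps)
  ultimately have norms: "dot3 (A 1) (A 1) = \<sigma>1\<^sup>2" "dot3 (A 2) (A 2) = \<sigma>2\<^sup>2"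
    "dot3 (A 3) (A 3) = \<sigma>3\<^sup>2"
    using yz by (simp_all add: dot3_def A_def power2_eq_square)
  have normal: "distributed M lborel (X i) (\<lambda>x. ennreal (normal_density 0 \<sigma> x))"
    if "dot3 (A i) (A i) = \<sigma>\<^sup>2" "\<sigma> > 0" for i \<sigma>
    using distributed_indep_std_normal_sum[OF _ ind std, of "A i"] that
    by (simp add: X_def[abs_def] dot3_def add.assoc)
  note cor = tree_correlations_of_rows[OF ind std rows[of 1] rows[of 2] rows[of 3] pos norms]
  have "correlation M (X 1) (X 2) = \<rho>12"
    using cor(1) pos by (simp add: dot3_def A_def)
  moreover have "correlation M (X 1) (X 3) = r"
    using cor(2) pos by (simp add: dot3_def A_def)
  moreover have "correlation M (\<lambda>w. X 1 w + X 2 w) (X 3) = \<rho>0"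
  proof -
    have "dot3 (A 1) (A 3) + dot3 (A 2) (A 3) = \<sigma>3 * (\<rho>0 * s)"
      unfolding y[symmetric] by (simp add: dot3_def A_def algebra_simps)
    moreover have "sqrt (\<sigma>1\<^sup>2 + \<sigma>2\<^sup>2 + 2 * dot3 (A 1) (A 2)) = s"
      unfolding s(1) by (simp add: dot3_def A_def algebra_simps)
    ultimately show ?thesis
      using cor(3) pos s(2) by simp
  qed
  moreover have "centered_mvn3 M (X 1) (X 2) (X 3)"
    unfolding centered_mvn3_def using \<open>prob_space M\<close> ind std
    by (intro conjI exI[of _ triple_coord] exI[of _ A]) (auto simp: X_def)
  ultimately show ?thesis
    unfolding gaussian_tree_correlations_def
    using normal[OF norms(1) pos(1)] normal[OF norms(2) pos(2)] normal[OF norms(3) pos(3)] by blast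
qed

theorem mainTheorem6:
  fixes \<sigma>1 \<sigma>2 \<sigma>3 \<rho>12 \<rho>0 :: real
  assumes "\<sigma>1 > 0" and "\<sigma>2 > 0" and "\<sigma>3 > 0"
    and "\<rho>12 \<in> {-1..1}" and "\<rho>0 \<in> {-1..1}"
    and "\<sigma>1\<^sup>2 + \<sigma>2\<^sup>2 + 2 * \<rho>12 * \<sigma>1 * \<sigma>2 > 0"
  shows "{correlation M X1 X3 | (M :: (real \<times> real \<times> real) measure) X1 X2 X3.
            centered_mvn3 M X1 X2 X3 \<and>
            distributed M lborel X1 (\<lambda>x. ennreal (normal_density 0 \<sigma>1 x)) \<and>
            distributed M lborel X2 (\<lambda>x. ennreal (normal_density 0 \<sigma>2 x)) \<and>
            distributed M lborel X3 (\<lambda>x. ennreal (normal_density 0 \<sigma>3 x)) \<and>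
            correlation M X1 X2 = \<rho>12 \<and>
            correlation M (\<lambda>x. X1 x + X2 x) X3 = \<rho>0}
         = {(\<rho>0 * \<rho>12 * \<sigma>2 + \<rho>0 * \<sigma>1) / sqrt (\<sigma>1\<^sup>2 + \<sigma>2\<^sup>2 + 2 * \<rho>12 * \<sigma>1 * \<sigma>2)
              - sqrt (\<sigma>2\<^sup>2 * (1 - \<rho>12\<^sup>2) * (1 - \<rho>0\<^sup>2)) / sqrt (\<sigma>1\<^sup>2 + \<sigma>2\<^sup>2 + 2 * \<rho>12 * \<sigma>1 * \<sigma>2)
            ..
            (\<rho>0 * \<rho>12 * \<sigma>2 + \<rho>0 * \<sigma>1) / sqrt (\<sigma>1\<^sup>2 + \<sigma>2\<^sup>2 + 2 * \<rho>12 * \<sigma>1 * \<sigma>2)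
              + sqrt (\<sigma>2\<^sup>2 * (1 - \<rho>12\<^sup>2) * (1 - \<rho>0\<^sup>2)) / sqrt (\<sigma>1\<^sup>2 + \<sigma>2\<^sup>2 + 2 * \<rho>12 * \<sigma>1 * \<sigma>2)}"
proof -
  define s where "s = sqrt (\<sigma>1\<^sup>2 + \<sigma>2\<^sup>2 + 2 * \<rho>12 * \<sigma>1 * \<sigma>2)"
  define D where "D = \<sigma>2\<^sup>2 * (1 - \<rho>12\<^sup>2) * (1 - \<rho>0\<^sup>2)"
  have "s > 0"
    using assms(6) by (simp add: s_def)
  have "\<rho>12\<^sup>2 \<le> 1" "\<rho>0\<^sup>2 \<le> 1" "D \<ge> 0"
    using assms(4,5) by (simp_all add: D_def abs_square_le_1 abs_le_iff)
  have "gaussian_tree_correlations \<sigma>1 \<sigma>2 \<sigma>3 \<rho>12 \<rho>0 =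
      {r. (s * r - (\<rho>0 * \<rho>12 * \<sigma>2 + \<rho>0 * \<sigma>1))\<^sup>2 \<le> D}"
    using gaussian_tree_correlation_bound[OF assms(1-3) s_def \<open>s > 0\<close>]
      gaussian_tree_correlation_realisable[OF assms(1-3) \<open>\<rho>12\<^sup>2 \<le> 1\<close> \<open>\<rho>0\<^sup>2 \<le> 1\<close> s_def \<open>s > 0\<close>]
    unfolding D_def by (fastforce simp: gaussian_tree_correlations_def algebra_simps)
  also have "\<dots> = {(\<rho>0 * \<rho>12 * \<sigma>2 + \<rho>0 * \<sigma>1) / s - sqrt D / s ..
      (\<rho>0 * \<rho>12 * \<sigma>2 + \<rho>0 * \<sigma>1) / s + sqrt D / s}"
    using quadratic_bound_iff_interval[OF \<open>s > 0\<close> \<open>D \<ge> 0\<close>] by blast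
  finally show ?thesis
    unfolding gaussian_tree_correlations_def s_def D_def .
qed

end
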